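(* Assume the Continuum Hypothesis. Then there exists a maximal cofinitary group $G \le \mathrm{Sym}(\mathbb{N})$ such that every countable group embeds (as an abstract group) into $G$.
   Context: $\mathrm{Sym}(\mathbb{N})$ is the group of bijections $\mathbb{N}\to\mathbb{N}$ under composition. A permutation is cofinitary if it is the identity or has only finitely many fixed points. A subgroup of $\mathrm{Sym}(\mathbb{N})$ is cofinitary if all its elements are cofinitary, and maximal cofinitary if it is cofinitary and not properly contained in another cofinitary subgroup. *)

theory Defs
  imports Complex_Main "HOL-Library.Equipollence" "HOL-Algebra.Bij"
begin

definition CH :: bool where
  "CH \<longleftrightarrow> (\<forall>A :: real set. countable A \<or> A \<approx> (UNIV :: real set))"

abbreviation SymN :: "(nat \<Rightarrow> nat) monoid" where
  "SymN \<equiv> BijGroup (UNIV :: nat set)"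

definition cofinitary :: "(nat \<Rightarrow> nat) \<Rightarrow> bool" where
  "cofinitary f \<longleftrightarrow> f = id \<or> finite {n. f n = n}"

definition cofinitary_group :: "(nat \<Rightarrow> nat) set \<Rightarrow> bool" where
  "cofinitary_group G \<longleftrightarrow> subgroup G SymN \<and> (\<forall>f\<in>G. cofinitary f)"

definition maximal_cofinitary_group :: "(nat \<Rightarrow> nat) set \<Rightarrow> bool" where
  "maximal_cofinitary_group G \<longleftrightarrow> cofinitary_group G \<and>
     (\<forall>H. cofinitary_group H \<and> G \<subseteq> H \<longrightarrow> H = G)"

end

theory Submission
  imports Defs "HOL-Analysis.Abstract_Topology_2"
begin

(* Under CH the countable groups with carrier a set of naturals (the "nat monoid"s) can be listed
   by a well-founded total order in which every element has only countably many predecessors.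
   Along this order we build, by well-founded recursion, an increasing family of countable
   cofinitary groups G_K such that G_K contains an isomorphic copy of K and all earlier G_K'.
   The union of this chain is a cofinitary group embedding every countable group, and Zorn's
   lemma extends it to a maximal cofinitary group.

   The one genuinely combinatorial ingredient is the extension step: a countable cofinitary group
   H and a countable group K yield a countable cofinitary group containing H and a copy of K.
   K acts freely on K x N, giving a cofinitary copy L of K in Sym(N).  A back-and-forth
   construction produces a bijection p such that every word h1 (p l1 p^-1) ... hn (p ln p^-1) with
   non-trivial letters has only finitely many fixed points.  A normal-form argument for
   alternating words then shows that the group generated by H and p L p^-1 is cofinitary. *)

section \<open>Permutation groups on the naturals\<close>

text \<open>Inside HOL-Algebra the name \<open>inv\<close> refers to the group inverse, so the inverse
  of a bijection of the naturals gets its own name.\<close>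
abbreviation perm_inv :: "(nat \<Rightarrow> nat) \<Rightarrow> nat \<Rightarrow> nat" where
  "perm_inv f \<equiv> inv_into UNIV f"

definition perm_group :: "(nat \<Rightarrow> nat) set \<Rightarrow> bool" where
  "perm_group X \<longleftrightarrow> (\<forall>f\<in>X. bij f) \<and> id \<in> X \<and> (\<forall>f\<in>X. \<forall>g\<in>X. f \<circ> g \<in> X)
     \<and> (\<forall>f\<in>X. perm_inv f \<in> X)"

lemma perm_groupD:
  assumes "perm_group X"
  shows "f \<in> X \<Longrightarrow> bij f" "id \<in> X" "f \<in> X \<Longrightarrow> g \<in> X \<Longrightarrow> f \<circ> g \<in> X"
    "f \<in> X \<Longrightarrow> perm_inv f \<in> X"
  using assms unfolding perm_group_def by auto

lemma carrier_SymN: "carrier SymN = {f. bij f}"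
  by (auto simp: BijGroup_def Bij_def)

lemma mult_SymN: "bij f \<Longrightarrow> bij g \<Longrightarrow> f \<otimes>\<^bsub>SymN\<^esub> g = f \<circ> g"
  by (auto simp: BijGroup_def Bij_def compose_def)

lemma one_SymN: "\<one>\<^bsub>SymN\<^esub> = id"
  by (auto simp: BijGroup_def)

lemma inv_SymN: "bij f \<Longrightarrow> inv\<^bsub>SymN\<^esub> f = perm_inv f"
  by (auto simp: inv_BijGroup Bij_def)

lemma subgroup_SymN_iff: "subgroup X SymN \<longleftrightarrow> perm_group X"
proof
  assume sub: "subgroup X SymN"
  have bij: "f \<in> X \<Longrightarrow> bij f" for f
    using subgroup.subset[OF sub] carrier_SymN by blast
  show "perm_group X" unfolding perm_group_def
    using bij subgroup.one_closed[OF sub] subgroup.m_closed[OF sub] subgroup.m_inv_closed[OF sub]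
    by (auto simp: one_SymN mult_SymN inv_SymN)
next
  assume p: "perm_group X"
  show "subgroup X SymN"
    by standard (use p in \<open>auto simp: perm_group_def carrier_SymN mult_SymN one_SymN inv_SymN\<close>)
qed

definition Fix :: "(nat \<Rightarrow> nat) \<Rightarrow> nat set" where
  "Fix f = {x. f x = x}"

lemma cofinitary_iff: "cofinitary f \<longleftrightarrow> f = id \<or> finite (Fix f)"
  by (simp add: cofinitary_def Fix_def)

lemma cofinitary_group_iff: "cofinitary_group G \<longleftrightarrow> perm_group G \<and> (\<forall>f\<in>G. cofinitary f)"
  by (simp add: cofinitary_group_def subgroup_SymN_iff)

lemma cofinitary_group_Union_chain:
  assumes ne: "C \<noteq> {}" and cof: "\<And>X. X \<in> C \<Longrightarrow> cofinitary_group X"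
    and chain: "\<And>X Y. X \<in> C \<Longrightarrow> Y \<in> C \<Longrightarrow> X \<subseteq> Y \<or> Y \<subseteq> X"
  shows "cofinitary_group (\<Union>C)"
proof -
  have p: "perm_group X" if "X \<in> C" for X
    using cof[OF that] by (simp add: cofinitary_group_iff)
  have comp: "f \<circ> g \<in> \<Union>C" if fg: "f \<in> \<Union>C" "g \<in> \<Union>C" for f g
  proof -
    obtain X Y where XY: "X \<in> C" "Y \<in> C" "f \<in> X" "g \<in> Y" using fg by blast
    then consider "X \<subseteq> Y" | "Y \<subseteq> X" using chain by blast
    then show ?thesis
      by cases (use XY perm_groupD(3)[OF p] in blast)+
  qed
  have "perm_group (\<Union>C)"
    unfolding perm_group_def
  proof (intro conjI ballI comp)
    obtain X0 where "X0 \<in> C" using ne by blast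
    then show "id \<in> \<Union>C" using perm_groupD(2)[OF p] by blast
  next
    fix f assume "f \<in> \<Union>C"
    then obtain X where "X \<in> C" "f \<in> X" by blast
    then show "bij f" "perm_inv f \<in> \<Union>C" using perm_groupD(1,4)[OF p] by blast+
  qed
  then show ?thesis using cof by (auto simp: cofinitary_group_iff)
qed

text \<open>Adjoining the identity allows the empty chain as well.\<close>
lemma cofinitary_group_insert_id_Union:
  assumes cof: "\<And>X. X \<in> C \<Longrightarrow> cofinitary_group X"
    and chain: "\<And>X Y. X \<in> C \<Longrightarrow> Y \<in> C \<Longrightarrow> X \<subseteq> Y \<or> Y \<subseteq> X"
  shows "cofinitary_group (insert id (\<Union>C))"
proof (cases "C = {}")
  case True
  have "perm_group {id}" by (simp add: perm_group_def)
  then show ?thesis using True by (simp add: cofinitary_group_iff cofinitary_def)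
next
  case False
  then obtain X where "X \<in> C" by blast
  then have "id \<in> \<Union>C" using cof perm_groupD(2) by (auto simp: cofinitary_group_iff)
  then show ?thesis using cofinitary_group_Union_chain[OF False cof chain] by (simp add: insert_absorb)
qed

lemma maximal_cofinitary_extension:
  assumes G0: "cofinitary_group G0"
  shows "\<exists>M. maximal_cofinitary_group M \<and> G0 \<subseteq> M"
proof -
  let ?A = "{G. cofinitary_group G \<and> G0 \<subseteq> G}"
  have "\<exists>M\<in>?A. \<forall>X\<in>?A. M \<subseteq> X \<longrightarrow> X = M"
  proof (rule Zorn_Lemma2, intro ballI)
    fix C assume C: "C \<in> chains ?A"
    then have CA: "C \<subseteq> ?A" and chain: "\<And>X Y. X \<in> C \<Longrightarrow> Y \<in> C \<Longrightarrow> X \<subseteq> Y \<or> Y \<subseteq> X"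
      unfolding chains_def chain_subset_def by auto
    show "\<exists>U\<in>?A. \<forall>X\<in>C. X \<subseteq> U"
    proof (cases "C = {}")
      case True then show ?thesis using G0 by blast
    next
      case False
      have "cofinitary_group (\<Union>C)"
        by (rule cofinitary_group_Union_chain[OF False _ chain]) (use CA in blast)
      moreover have "G0 \<subseteq> \<Union>C" using False CA by blast
      ultimately show ?thesis by blast
    qed
  qed
  then obtain M where M: "cofinitary_group M" "G0 \<subseteq> M"
    and max: "\<forall>X\<in>?A. M \<subseteq> X \<longrightarrow> X = M"
    by blast
  have "maximal_cofinitary_group M"
    unfolding maximal_cofinitary_group_def
  proof (intro conjI allI impI)
    fix X assume "cofinitary_group X \<and> M \<subseteq> X"
    then show "X = M" using max M(2) by blast
  qed (rule M(1))
  then show ?thesis using M(2) by blast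
qed

section \<open>Conjugation\<close>

lemma perm_inv_comp: "bij p \<Longrightarrow> perm_inv p \<circ> p = id"
  by (meson bij_is_inj inv_o_cancel)

lemma comp_perm_inv: "bij p \<Longrightarrow> p \<circ> perm_inv p = id"
  by (meson bij_is_surj surj_iff)

definition conjugate :: "(nat \<Rightarrow> nat) \<Rightarrow> (nat \<Rightarrow> nat) \<Rightarrow> nat \<Rightarrow> nat" where
  "conjugate p f = p \<circ> f \<circ> perm_inv p"

lemma conjugate_comp: "bij p \<Longrightarrow> conjugate p f \<circ> conjugate p g = conjugate p (f \<circ> g)"
  by (simp add: conjugate_def fun_eq_iff bij_is_inj)

lemma conjugate_id: "bij p \<Longrightarrow> conjugate p id = id"
  by (simp add: conjugate_def comp_perm_inv)

lemma conjugate_inj: "bij p \<Longrightarrow> conjugate p f = conjugate p g \<Longrightarrow> f = g"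
  unfolding conjugate_def by (metis (no_types, lifting) comp_assoc comp_id id_comp perm_inv_comp)

lemma bij_conjugate: "bij p \<Longrightarrow> bij f \<Longrightarrow> bij (conjugate p f)"
  by (simp add: conjugate_def bij_comp bij_imp_bij_inv)

lemma conjugate_inv: "bij p \<Longrightarrow> bij f \<Longrightarrow> perm_inv (conjugate p f) = conjugate p (perm_inv f)"
  by (intro inv_unique_comp) (simp_all add: conjugate_comp perm_inv_comp comp_perm_inv conjugate_id)

lemma conjugate_Fix:
  assumes "bij p" shows "Fix (conjugate p f) = p ` Fix f"
proof -
  have "x \<in> Fix (conjugate p f) \<longleftrightarrow> perm_inv p x \<in> Fix f" for x
    using assms by (auto simp: conjugate_def Fix_def bij_is_inj bij_inv_eq_iff)
  moreover have "perm_inv p x \<in> Fix f \<longleftrightarrow> x \<in> p ` Fix f" for x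
    using assms by (metis bij_inv_eq_iff image_iff)
  ultimately show ?thesis by blast
qed

lemma cofinitary_conjugate: "bij p \<Longrightarrow> cofinitary f \<Longrightarrow> cofinitary (conjugate p f)"
  by (auto simp: cofinitary_iff conjugate_Fix conjugate_id)

lemma perm_group_conjugate:
  assumes p: "bij p" and L: "perm_group L"
  shows "perm_group (conjugate p ` L)"
  unfolding perm_group_def
proof (intro conjI ballI)
  show "bij f" if "f \<in> conjugate p ` L" for f
    using that p perm_groupD(1)[OF L] bij_conjugate by auto
  show "id \<in> conjugate p ` L"
    using conjugate_id[OF p] perm_groupD(2)[OF L] by (metis image_eqI)
  show "f \<circ> g \<in> conjugate p ` L" if "f \<in> conjugate p ` L" "g \<in> conjugate p ` L" for f g
    using that conjugate_comp[OF p] perm_groupD(3)[OF L] by (auto intro!: image_eqI)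
  show "perm_inv f \<in> conjugate p ` L" if "f \<in> conjugate p ` L" for f
    using that conjugate_inv[OF p] perm_groupD(1,4)[OF L] by (auto intro!: image_eqI)
qed

section \<open>Alternating words and the amalgam of two permutation groups\<close>

text \<open>A letter is a non-identity permutation tagged by the group it comes from:
  tag \<open>True\<close> for the first group \<open>H\<close>, tag \<open>False\<close> for the second group \<open>A\<close>.\<close>
definition is_letter :: "(nat \<Rightarrow> nat) set \<Rightarrow> (nat \<Rightarrow> nat) set \<Rightarrow> bool \<times> (nat \<Rightarrow> nat) \<Rightarrow> bool" where
  "is_letter H A a \<longleftrightarrow> snd a \<in> (if fst a then H else A) \<and> snd a \<noteq> id"

fun alternating :: "(nat \<Rightarrow> nat) set \<Rightarrow> (nat \<Rightarrow> nat) set \<Rightarrow> (bool \<times> (nat \<Rightarrow> nat)) list \<Rightarrow> bool" where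
  "alternating H A [] = True"
| "alternating H A [a] = is_letter H A a"
| "alternating H A (a # b # xs) = (is_letter H A a \<and> fst a \<noteq> fst b \<and> alternating H A (b # xs))"

text \<open>A word denotes the composition of its letters, the first letter being applied last.\<close>
fun word_eval :: "(bool \<times> (nat \<Rightarrow> nat)) list \<Rightarrow> nat \<Rightarrow> nat" where
  "word_eval [] = id"
| "word_eval (a # xs) = snd a \<circ> word_eval xs"

lemma word_eval_append: "word_eval (xs @ ys) = word_eval xs \<circ> word_eval ys"
  by (induction xs) auto

lemma alternating_Cons:
  "alternating H A (a # xs) \<longleftrightarrow>
     is_letter H A a \<and> alternating H A xs \<and> (xs \<noteq> [] \<longrightarrow> fst a \<noteq> fst (hd xs))"
  by (cases xs) auto

lemma alternating_append:
  "alternating H A (xs @ ys) \<longleftrightarrow> alternating H A xs \<and> alternating H A ys \<and>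
     (xs \<noteq> [] \<and> ys \<noteq> [] \<longrightarrow> fst (last xs) \<noteq> fst (hd ys))"
  by (induction xs) (auto simp: alternating_Cons)

lemma alternating_bij:
  assumes "perm_group H" "perm_group A" shows "alternating H A xs \<Longrightarrow> bij (word_eval xs)"
proof (induction xs)
  case (Cons a xs)
  then have "bij (snd a)" "bij (word_eval xs)"
    using assms by (auto simp: alternating_Cons is_letter_def perm_group_def split: if_splits)
  then show ?case by (metis bij_comp word_eval.simps(2))
qed simp

fun mult_left :: "bool \<times> (nat \<Rightarrow> nat) \<Rightarrow> (bool \<times> (nat \<Rightarrow> nat)) list \<Rightarrow> (bool \<times> (nat \<Rightarrow> nat)) list" where
  "mult_left (t, y) [] = (if y = id then [] else [(t, y)])"
| "mult_left (t, y) ((t', x) # xs) =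
     (if t = t' then (if y \<circ> x = id then xs else (t, y \<circ> x) # xs)
      else (if y = id then (t', x) # xs else (t, y) # (t', x) # xs))"

lemma word_eval_mult_left: "word_eval (mult_left (t, y) xs) = y \<circ> word_eval xs"
proof (cases xs)
  case (Cons a ys)
  obtain t' x where a: "a = (t', x)" by (cases a)
  have "y \<circ> (x \<circ> word_eval ys) = word_eval ys" if "y \<circ> x = id"
    using that by (metis comp_assoc id_comp)
  then show ?thesis using Cons a by (auto simp: comp_assoc)
qed simp

lemma alternating_mult_left:
  assumes H: "perm_group H" and A: "perm_group A" and y: "y \<in> (if t then H else A)"
    and xs: "alternating H A xs"
  shows "alternating H A (mult_left (t, y) xs)"
proof (cases xs)
  case Nil then show ?thesis using y by (auto simp: is_letter_def)
next
  case (Cons a ys)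
  obtain t' x where a: "a = (t', x)" by (cases a)
  have ys: "alternating H A ys" and x: "is_letter H A (t', x)"
    and hd: "ys \<noteq> [] \<Longrightarrow> t' \<noteq> fst (hd ys)"
    using xs Cons a by (auto simp: alternating_Cons)
  have "y \<circ> x \<in> (if t then H else A)" if "t = t'"
    using H A x y that by (auto simp: is_letter_def perm_group_def)
  then show ?thesis using Cons a ys hd x y by (auto simp: alternating_Cons is_letter_def)
qed

text \<open>The amalgam of \<open>H\<close> and \<open>A\<close>: all values of alternating words.  It is the subgroup
  of Sym(N) generated by \<open>"H \<union> A"\<close>.\<close>
definition amalgam :: "(nat \<Rightarrow> nat) set \<Rightarrow> (nat \<Rightarrow> nat) set \<Rightarrow> (nat \<Rightarrow> nat) set" where
  "amalgam H A = word_eval ` {xs. alternating H A xs}"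

lemma id_in_amalgam: "id \<in> amalgam H A"
  unfolding amalgam_def by (rule image_eqI[of _ _ "[]"]) auto

lemma amalgam_mult_left:
  assumes "perm_group H" "perm_group A" "y \<in> (if t then H else A)" "f \<in> amalgam H A"
  shows "y \<circ> f \<in> amalgam H A"
proof -
  obtain xs where xs: "alternating H A xs" "f = word_eval xs"
    using assms(4) by (auto simp: amalgam_def)
  then show ?thesis
    using alternating_mult_left[OF assms(1-3) xs(1)] word_eval_mult_left
    unfolding amalgam_def by (metis image_eqI mem_Collect_eq)
qed

lemma amalgam_comp:
  assumes H: "perm_group H" and A: "perm_group A" and f: "f \<in> amalgam H A"
  shows "alternating H A xs \<Longrightarrow> word_eval xs \<circ> f \<in> amalgam H A"
proof (induction xs)
  case (Cons a xs)
  then have xs: "alternating H A xs" and a: "snd a \<in> (if fst a then H else A)"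
    by (auto simp: alternating_Cons is_letter_def)
  have "snd a \<circ> (word_eval xs \<circ> f) \<in> amalgam H A"
    using amalgam_mult_left[OF H A a Cons.IH[OF xs]] .
  then show ?case by (metis comp_assoc word_eval.simps(2))
qed (simp add: f)

lemma amalgam_inv:
  assumes H: "perm_group H" and A: "perm_group A"
  shows "alternating H A xs \<Longrightarrow> perm_inv (word_eval xs) \<in> amalgam H A"
proof (induction xs)
  case Nil then show ?case by (metis id_in_amalgam inv_id word_eval.simps(1))
next
  case (Cons a xs)
  then have xs: "alternating H A xs" and a: "snd a \<in> (if fst a then H else A)"
    by (auto simp: alternating_Cons is_letter_def)
  have "bij (snd a)" using a H A by (auto simp: perm_group_def split: if_splits)
  moreover have "bij (word_eval xs)" using alternating_bij[OF H A xs] .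
  ultimately have inv: "perm_inv (word_eval (a # xs)) = perm_inv (word_eval xs) \<circ> (perm_inv (snd a) \<circ> id)"
    by (simp add: o_inv_distrib)
  have "perm_inv (snd a) \<in> (if fst a then H else A)"
    using a H A by (auto simp: perm_group_def split: if_splits)
  then have "perm_inv (snd a) \<circ> id \<in> amalgam H A"
    using amalgam_mult_left[OF H A] id_in_amalgam by blast
  moreover obtain ys where "alternating H A ys" "perm_inv (word_eval xs) = word_eval ys"
    using Cons.IH[OF xs] by (auto simp: amalgam_def)
  ultimately show ?case
    using amalgam_comp[OF H A] inv by metis
qed

lemma perm_group_amalgam:
  assumes H: "perm_group H" and A: "perm_group A"
  shows "perm_group (amalgam H A)"
  unfolding perm_group_def
  using alternating_bij[OF H A] id_in_amalgam amalgam_comp[OF H A] amalgam_inv[OF H A]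
  by (auto simp: amalgam_def)

lemma amalgam_contains:
  assumes "t \<Longrightarrow> x \<in> H" "\<not> t \<Longrightarrow> x \<in> A" shows "x \<in> amalgam H A"
proof (cases "x = id")
  case True then show ?thesis by (simp add: id_in_amalgam)
next
  case False then show ?thesis unfolding amalgam_def using assms
    by (intro image_eqI[of _ _ "[(t, x)]"]) (auto simp: is_letter_def)
qed

lemma countable_amalgam:
  assumes "countable H" "countable A" shows "countable (amalgam H A)"
proof -
  have "{xs. alternating H A xs} \<subseteq> lists (UNIV \<times> (H \<union> A))"
  proof
    fix xs assume "xs \<in> {xs. alternating H A xs}"
    then show "xs \<in> lists (UNIV \<times> (H \<union> A))"
      by (induction xs) (auto simp: alternating_Cons is_letter_def split: if_splits)
  qed
  moreover have "countable (lists ((UNIV :: bool set) \<times> (H \<union> A)))"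
    using assms by (intro countable_lists countable_SIGMA) auto
  ultimately show ?thesis unfolding amalgam_def by (auto intro: countable_subset)
qed

text \<open>Cyclic rotation does not change the number of fixed points: \<open>v\<close> maps the fixed points
  of \<open>"u \<circ> v"\<close> injectively to those of \<open>"v \<circ> u"\<close>.\<close>
lemma finite_Fix_rotate: "inj v \<Longrightarrow> finite (Fix (v \<circ> u)) \<Longrightarrow> finite (Fix (u \<circ> v))"
proof -
  assume v: "inj v" and fin: "finite (Fix (v \<circ> u))"
  have "v ` Fix (u \<circ> v) \<subseteq> Fix (v \<circ> u)" by (auto simp: Fix_def)
  then show ?thesis using fin v by (meson finite_imageD finite_subset inj_on_subset subset_UNIV)
qed

lemma alternating_same_ends:
  assumes alt: "alternating H A (a # ys)" and ne: "ys \<noteq> []" and ends: "fst a = fst (last ys)"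
  obtains mid c where "ys = mid @ [c]" "mid \<noteq> []" "alternating H A mid"
    "is_letter H A a" "is_letter H A c" "fst c = fst a"
    "fst (hd mid) \<noteq> fst a" "fst (last mid) \<noteq> fst a"
proof -
  define mid c where "mid = butlast ys" and "c = last ys"
  have ys: "ys = mid @ [c]" using ne by (simp add: mid_def c_def)
  have a: "is_letter H A a" and alt_ys: "alternating H A ys" and hd: "fst a \<noteq> fst (hd ys)"
    using alt ne by (auto simp: alternating_Cons)
  have c_a: "fst c = fst a" using ends by (simp add: c_def)
  have mid_ne: "mid \<noteq> []"
  proof
    assume "mid = []"
    then show False using hd c_a ys by simp
  qed
  have "alternating H A mid" "alternating H A [c]" "fst (last mid) \<noteq> fst c"
    using alt_ys mid_ne unfolding ys alternating_append by simp_all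
  moreover have "fst (hd mid) \<noteq> fst a" using hd ys mid_ne by simp
  ultimately show ?thesis using that ys mid_ne a c_a by simp
qed

text \<open>The amalgam is cofinitary as soon as the two groups are, and every alternating word starting
  with a letter of \<open>H\<close> and ending with a letter of \<open>A\<close> has only finitely many fixed
  points: all other non-trivial words reduce to these by cyclic rotation and cancellation.\<close>
locale amalgam_criterion =
  fixes H A :: "(nat \<Rightarrow> nat) set"
  assumes perm_H: "perm_group H" and perm_A: "perm_group A"
    and cof_H: "\<And>h. h \<in> H \<Longrightarrow> cofinitary h"
    and cof_A: "\<And>a. a \<in> A \<Longrightarrow> cofinitary a"
    and mixed: "\<And>xs. alternating H A xs \<Longrightarrow> xs \<noteq> [] \<Longrightarrow> fst (hd xs) \<Longrightarrow> \<not> fst (last xs) \<Longrightarrow>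
        finite (Fix (word_eval xs))"
begin

text \<open>Words with end letters from different groups: either they already start in \<open>H\<close> and end
  in \<open>A\<close>, or rotating the first letter to the end makes them do so.\<close>
lemma finite_Fix_mixed_ends:
  assumes alt: "alternating H A xs" and ne: "xs \<noteq> []" and ends: "fst (hd xs) \<noteq> fst (last xs)"
  shows "finite (Fix (word_eval xs))"
proof (cases "fst (hd xs)")
  case True then show ?thesis using assms mixed by auto
next
  case False
  obtain a ys where xs: "xs = a # ys" using ne by (cases xs) auto
  have ys: "ys \<noteq> []" using False xs ends by auto
  then have a: "\<not> fst a" "fst (last ys)" using False xs ends by auto
  have alt_ys: "alternating H A ys" and "is_letter H A a" and "fst (hd ys)"
    using alt xs ys a by (auto simp: alternating_Cons)
  then have "alternating H A (ys @ [a])"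
    using a alternating_append[of H A ys "[a]"] by auto
  then have "finite (Fix (word_eval (ys @ [a])))"
    using mixed ys \<open>fst (hd ys)\<close> a by simp
  then have "finite (Fix (word_eval ys \<circ> snd a))" by (simp add: word_eval_append)
  moreover have "inj (word_eval ys)" using alternating_bij[OF perm_H perm_A alt_ys] bij_is_inj by blast
  ultimately show ?thesis using finite_Fix_rotate xs by auto
qed

text \<open>Words whose end letters \<open>a\<close>, \<open>c\<close> come from the same group: rotating \<open>c\<close> to the front
  merges it with \<open>a\<close>, which either cancels (leaving the shorter word \<open>mid\<close>) or yields a word
  with end letters from different groups.\<close>
lemma cofinitary_same_ends:
  assumes mid: "mid \<noteq> []" "alternating H A mid" "cofinitary (word_eval mid)"
    and a: "is_letter H A a" and c: "is_letter H A c" "fst c = fst a"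
    and ends: "fst (hd mid) \<noteq> fst a" "fst (last mid) \<noteq> fst a"
  shows "cofinitary (word_eval (a # mid @ [c]))"
proof -
  have ba: "bij (snd a)" and bc: "bij (snd c)" and ca: "snd c \<circ> snd a \<in> (if fst a then H else A)"
    using a c perm_H perm_A by (auto simp: is_letter_def perm_group_def split: if_splits)
  have eval: "word_eval (a # mid @ [c]) = snd a \<circ> (word_eval mid \<circ> snd c)"
    by (simp add: word_eval_append)
  have inj: "inj (word_eval mid \<circ> snd c)"
    using alternating_bij[OF perm_H perm_A mid(2)] bc by (simp add: bij_is_inj inj_compose)
  have rotated: "finite (Fix (word_eval (a # mid @ [c])))"
    if "finite (Fix (word_eval mid \<circ> (snd c \<circ> snd a)))"
    using finite_Fix_rotate[OF inj, of "snd a"] that eval by (simp add: comp_assoc)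
  show ?thesis
  proof (cases "snd c \<circ> snd a = id")
    case True
    have "snd a \<circ> snd c = id"
      using True ba bc by (metis bij_is_inj comp_assoc comp_id id_comp inj_iff)
    then show ?thesis
      using mid(3) rotated True eval by (auto simp: cofinitary_iff)
  next
    case False
    let ?w = "mid @ [(fst a, snd c \<circ> snd a)]"
    have "alternating H A ?w"
      using mid ends ca False by (auto simp: alternating_append is_letter_def)
    then have "finite (Fix (word_eval ?w))"
      using finite_Fix_mixed_ends ends mid(1) by simp
    then show ?thesis using rotated by (simp add: word_eval_append cofinitary_iff)
  qed
qed

lemma alternating_cofinitary: "alternating H A xs \<Longrightarrow> cofinitary (word_eval xs)"
proof (induction "length xs" arbitrary: xs rule: less_induct)
  case less
  consider "xs = []" | a where "xs = [a]" | a ys where "xs = a # ys" "ys \<noteq> []"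
    by (metis list.exhaust)
  then show ?case
  proof cases
    case 1 then show ?thesis by (simp add: cofinitary_def)
  next
    case (2 a) then show ?thesis
      using less.prems cof_H cof_A by (auto simp: is_letter_def split: if_splits)
  next
    case (3 a ys)
    show ?thesis
    proof (cases "fst a = fst (last ys)")
      case False
      have "finite (Fix (word_eval xs))"
        by (rule finite_Fix_mixed_ends) (use less.prems 3 False in auto)
      then show ?thesis by (simp add: cofinitary_iff)
    next
      case True
      obtain mid c where ys: "ys = mid @ [c]" and mid: "mid \<noteq> []" "alternating H A mid"
        and a: "is_letter H A a" and c: "is_letter H A c" "fst c = fst a"
        and ends: "fst (hd mid) \<noteq> fst a" "fst (last mid) \<noteq> fst a"
        using alternating_same_ends[OF _ 3(2) True] less.prems 3(1) by blast
      have "cofinitary (word_eval mid)" using less.hyps mid(2) 3(1) ys by simp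
      then show ?thesis using cofinitary_same_ends[OF mid _ a c ends] 3(1) ys by simp
    qed
  qed
qed

lemma amalgam_cofinitary: "f \<in> amalgam H A \<Longrightarrow> cofinitary f"
  using alternating_cofinitary by (auto simp: amalgam_def)

end

section \<open>A generic conjugating bijection\<close>

text \<open>For a bijection \<open>p\<close> and letters \<open>(g, l)\<close>, the word
  \<open>conj_word p [(g\<^sub>1, l\<^sub>1), \<dots>, (g\<^sub>n, l\<^sub>n)]\<close> is the permutation that first applies
  \<open>g\<^sub>1 \<circ> p \<circ> l\<^sub>1 \<circ> p\<inverse>\<close>, then \<open>g\<^sub>2 \<circ> p \<circ> l\<^sub>2 \<circ> p\<inverse>\<close>, and so on.\<close>
fun conj_word :: "(nat \<Rightarrow> nat) \<Rightarrow> ((nat \<Rightarrow> nat) \<times> (nat \<Rightarrow> nat)) list \<Rightarrow> nat \<Rightarrow> nat" where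
  "conj_word p [] = id"
| "conj_word p ((g, l) # ws) = conj_word p ws \<circ> (g \<circ> conjugate p l)"

lemma conj_word_snoc:
  "conj_word p (ws @ [(g, l)]) = (g \<circ> conjugate p l) \<circ> conj_word p ws"
proof (induction ws)
  case (Cons w ws)
  obtain a b where "w = (a, b)" by (cases w)
  then show ?case using Cons by (simp add: comp_assoc)
qed simp

text \<open>The same word evaluated along a relation \<open>Q\<close> (an approximation of the graph of \<open>p\<close>):
  \<open>walk Q ws x y\<close> says that \<open>y\<close> can be reached from \<open>x\<close>, each letter \<open>(g, l)\<close> stepping
  backwards along \<open>Q\<close>, applying \<open>l\<close>, stepping forwards along \<open>Q\<close> and applying \<open>g\<close>.\<close>
fun walk :: "(nat \<times> nat) set \<Rightarrow> ((nat \<Rightarrow> nat) \<times> (nat \<Rightarrow> nat)) list \<Rightarrow> nat \<Rightarrow> nat \<Rightarrow> bool" where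
  "walk Q [] x y \<longleftrightarrow> x = y"
| "walk Q ((g, l) # ws) x y \<longleftrightarrow> (\<exists>c e. (c, x) \<in> Q \<and> (l c, e) \<in> Q \<and> walk Q ws (g e) y)"

lemma walk_mono: "walk P ws x y \<Longrightarrow> P \<subseteq> Q \<Longrightarrow> walk Q ws x y"
  by (induction P ws x y rule: walk.induct) auto

lemma walk_start: "walk Q ws x y \<Longrightarrow> ws \<noteq> [] \<Longrightarrow> x \<in> Range Q"
  by (cases ws) auto

lemma walk_end:
  "walk Q ws x y \<Longrightarrow> ws \<noteq> [] \<Longrightarrow> \<exists>g e. g \<in> fst ` set ws \<and> e \<in> Range Q \<and> y = g e"
proof (induction Q ws x y rule: walk.induct)
  case (2 Q g l ws x y)
  then obtain c e where ce: "(l c, e) \<in> Q" "walk Q ws (g e) y" by auto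
  show ?case
  proof (cases "ws = []")
    case True
    then have "y = g e" using ce by simp
    then show ?thesis using ce(1) by force
  next
    case False
    then obtain g' e' where "g' \<in> fst ` set ws" "e' \<in> Range Q" "y = g' e'"
      using "2.IH" ce(2) by blast
    then show ?thesis by auto
  qed
qed simp

lemma walk_graph_iff: "bij p \<Longrightarrow> walk {(c, p c) | c. True} ws x y \<longleftrightarrow> conj_word p ws x = y"
proof (induction ws arbitrary: x)
  case (Cons w ws)
  obtain g l where w: "w = (g, l)" by (cases w)
  have "x = p c \<longleftrightarrow> c = perm_inv p x" for c
    using Cons.prems by (metis bij_inv_eq_iff)
  then have "walk {(c, p c) | c. True} (w # ws) x y \<longleftrightarrow>
      walk {(c, p c) | c. True} ws (g (p (l (perm_inv p x)))) y"
    using w by auto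
  then show ?case using Cons w by (simp add: conjugate_def)
qed simp

definition avoid :: "(nat \<Rightarrow> nat) set \<Rightarrow> nat set \<Rightarrow> nat set" where
  "avoid S B = B \<union> (\<Union>g\<in>S. Fix g \<union> g -` B \<union> g ` B)"

lemma finite_avoid:
  assumes "finite S" "\<And>g. g \<in> S \<Longrightarrow> inj g \<and> finite (Fix g)" "finite B"
  shows "finite (avoid S B)"
  unfolding avoid_def using assms by (auto intro!: finite_vimageI)

lemma walk_insert_new_value:
  assumes b: "b \<notin> avoid S (Range Q)" and ws: "fst ` set ws \<subseteq> S"
  shows "walk (insert (a, b) Q) ws x y \<Longrightarrow> x \<noteq> b \<Longrightarrow> y \<in> Range Q \<Longrightarrow> walk Q ws x y"
  using ws
proof (induction "insert (a, b) Q" ws x y rule: walk.induct)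
  case (2 g l ws x y)
  then obtain c e where ce: "(c, x) \<in> Q" "(l c, e) \<in> insert (a, b) Q"
      "walk (insert (a, b) Q) ws (g e) y" by auto
  have g: "g \<in> S" using 2 by auto
  have "e \<noteq> b"
  proof
    assume e: "e = b"
    show False
    proof (cases "ws = []")
      case True
      then have "g b \<in> Range Q" using ce e 2 by simp
      then show False using b g by (auto simp: avoid_def)
    next
      case False
      then have "g b \<in> Range (insert (a, b) Q)" using walk_start ce e by blast
      then show False using b g by (auto simp: avoid_def Fix_def)
    qed
  qed
  then have "(l c, e) \<in> Q" using ce(2) by auto
  moreover have "g e \<noteq> b" using b g \<open>(l c, e) \<in> Q\<close> unfolding avoid_def by blast
  ultimately show ?case using 2 ce by auto
qed simp

lemma closed_walk_insert_new_value:
  assumes b: "b \<notin> avoid S (Range Q)" and ws: "fst ` set ws \<subseteq> S"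
    and walk: "walk (insert (a, b) Q) ws x x"
  shows "walk Q ws x x"
proof (cases "ws = []")
  case False
  obtain g e where ge: "g \<in> S" "e \<in> Range (insert (a, b) Q)" "x = g e"
    using walk_end[OF walk False] ws by blast
  have "x \<noteq> b"
  proof
    assume x: "x = b"
    show False
    proof (cases "e = b")
      case True then show False using b ge x by (auto simp: avoid_def Fix_def)
    next
      case False
      then have "e \<in> Range Q" using ge by auto
      then show False using b ge x unfolding avoid_def by blast
    qed
  qed
  moreover have "x \<in> Range Q"
    using walk_start[OF walk False] \<open>x \<noteq> b\<close> by auto
  ultimately show ?thesis using walk_insert_new_value[OF b ws walk] by blast
qed simp

lemma walk_insert_new_point:
  assumes a: "a \<notin> avoid T (Domain Q)" and ws: "snd ` set ws \<subseteq> T"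
  shows "walk (insert (a, b) Q) ws x y \<Longrightarrow> walk Q ws x y"
  using ws
proof (induction "insert (a, b) Q" ws x y rule: walk.induct)
  case (2 g l ws x y)
  then obtain c e where ce: "(c, x) \<in> insert (a, b) Q" "(l c, e) \<in> insert (a, b) Q"
      "walk (insert (a, b) Q) ws (g e) y" by auto
  have l: "l \<in> T" using 2 by auto
  have "c \<noteq> a"
  proof
    assume "c = a"
    then have "l a \<in> Domain (insert (a, b) Q)" using ce(2) by blast
    then show False using a l by (auto simp: avoid_def Fix_def)
  qed
  then have "(c, x) \<in> Q" using ce(1) by auto
  then have "l c \<noteq> a" using a l unfolding avoid_def by blast
  then have "(l c, e) \<in> Q" using ce(2) by auto
  then show ?case using 2 ce \<open>(c, x) \<in> Q\<close> by auto
qed simp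

definition partial_bij :: "(nat \<times> nat) set \<Rightarrow> bool" where
  "partial_bij Q \<longleftrightarrow> (\<forall>x y z. (x, y) \<in> Q \<longrightarrow> (x, z) \<in> Q \<longrightarrow> y = z)
     \<and> (\<forall>x y z. (x, z) \<in> Q \<longrightarrow> (y, z) \<in> Q \<longrightarrow> x = y)"

lemma partial_bij_insert:
  "partial_bij Q \<Longrightarrow> a \<notin> Domain Q \<Longrightarrow> b \<notin> Range Q \<Longrightarrow> partial_bij (insert (a, b) Q)"
  unfolding partial_bij_def by blast

definition initial :: "(nat \<Rightarrow> nat) set \<Rightarrow> nat \<Rightarrow> (nat \<Rightarrow> nat) set" where
  "initial X s = {h \<in> X. h \<noteq> id \<and> to_nat_on X h < s}"

lemma initial_mono: "s \<le> t \<Longrightarrow> initial X s \<subseteq> initial X t"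
  by (auto simp: initial_def)

lemma finite_initial:
  assumes X: "countable X" shows "finite (initial X s)"
proof -
  have "initial X s \<subseteq> from_nat_into X ` {..<s}"
  proof
    fix h assume h: "h \<in> initial X s"
    then have "h = from_nat_into X (to_nat_on X h)" "to_nat_on X h < s"
      using from_nat_into_to_nat_on[OF X] by (simp_all add: initial_def)
    then show "h \<in> from_nat_into X ` {..<s}" by blast
  qed
  then show ?thesis by (rule finite_subset) auto
qed

lemma letters_in_initial:
  assumes W: "finite W" "W \<subseteq> (H - {id}) \<times> (L - {id})"
  obtains j where "W \<subseteq> initial H j \<times> initial L j"
proof -
  have "finite (to_nat_on H ` fst ` W \<union> to_nat_on L ` snd ` W)" using W(1) by simp
  then obtain j where j: "\<forall>n \<in> to_nat_on H ` fst ` W \<union> to_nat_on L ` snd ` W. n < j"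
    unfolding finite_nat_set_iff_bounded by blast
  have "w \<in> initial H j \<times> initial L j" if w: "w \<in> W" for w
  proof -
    have "fst w \<in> H - {id}" "snd w \<in> L - {id}" using W(2) w by auto
    moreover have "to_nat_on H (fst w) < j" "to_nat_on L (snd w) < j" using j w by auto
    ultimately show ?thesis by (simp add: initial_def mem_Times_iff)
  qed
  then show ?thesis using that by blast
qed

lemma finite_avoid_initial:
  assumes "countable X" "\<And>h. h \<in> X \<Longrightarrow> inj h \<and> cofinitary h" "finite B"
  shows "finite (avoid (initial X s) B)"
  using assms by (intro finite_avoid finite_initial) (auto simp: initial_def cofinitary_iff)

text \<open>At even stages \<open>2n\<close> the point \<open>n\<close> is put into the domain,
  at odd stages \<open>2n + 1\<close> into the range; the new value (point) avoids all obstacles coming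
  from the first few letters of \<open>H\<close> (of \<open>L\<close>), so that no new closed walk over these letters arises.\<close>
locale generic_conjugation =
  fixes H L :: "(nat \<Rightarrow> nat) set"
  assumes countable_H: "countable H" and countable_L: "countable L"
    and H: "\<And>h. h \<in> H \<Longrightarrow> inj h \<and> cofinitary h"
    and L: "\<And>l. l \<in> L \<Longrightarrow> inj l \<and> cofinitary l"
begin

definition new_value :: "nat \<Rightarrow> (nat \<times> nat) set \<Rightarrow> nat" where
  "new_value s Q = (SOME b. b \<notin> avoid (initial H s) (Range Q))"

definition new_point :: "nat \<Rightarrow> (nat \<times> nat) set \<Rightarrow> nat" where
  "new_point s Q = (SOME a. a \<notin> avoid (initial L s) (Domain Q))"

definition next_stage :: "nat \<Rightarrow> (nat \<times> nat) set \<Rightarrow> (nat \<times> nat) set" where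
  "next_stage s Q =
     (if even s then (if s div 2 \<in> Domain Q then Q else insert (s div 2, new_value s Q) Q)
      else (if s div 2 \<in> Range Q then Q else insert (new_point s Q, s div 2) Q))"

primrec stage :: "nat \<Rightarrow> (nat \<times> nat) set" where
  "stage 0 = {}"
| "stage (Suc s) = next_stage s (stage s)"

lemma new_value: "finite Q \<Longrightarrow> new_value s Q \<notin> avoid (initial H s) (Range Q)"
  unfolding new_value_def
  by (rule someI_ex, rule ex_new_if_finite[OF infinite_UNIV_nat])
    (simp add: finite_avoid_initial[OF countable_H H] finite_Range)

lemma new_point: "finite Q \<Longrightarrow> new_point s Q \<notin> avoid (initial L s) (Domain Q)"
  unfolding new_point_def
  by (rule someI_ex, rule ex_new_if_finite[OF infinite_UNIV_nat])
    (simp add: finite_avoid_initial[OF countable_L L] finite_Domain)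

lemma stage_finite_partial_bij: "finite (stage s) \<and> partial_bij (stage s)"
proof (induction s)
  case 0 then show ?case by (simp add: partial_bij_def)
next
  case (Suc s)
  then have fin: "finite (stage s)" and pb: "partial_bij (stage s)" by auto
  have "new_value s (stage s) \<notin> Range (stage s)" "new_point s (stage s) \<notin> Domain (stage s)"
    using new_value[OF fin] new_point[OF fin] by (auto simp: avoid_def)
  then show ?case using fin pb partial_bij_insert by (auto simp: next_stage_def)
qed

lemma stage_mono: "s \<le> t \<Longrightarrow> stage s \<subseteq> stage t"
proof (induction t rule: dec_induct)
  case (step t)
  then show ?case by (auto simp: next_stage_def)
qed simp

lemma stage_Domain: "n \<in> Domain (stage (Suc (2 * n)))"
  by (auto simp: next_stage_def)

lemma stage_Range: "n \<in> Range (stage (Suc (Suc (2 * n))))"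
proof -
  have "odd (Suc (2 * n))" "Suc (2 * n) div 2 = n" by auto
  then show ?thesis by (simp only: stage.simps) (auto simp: next_stage_def)
qed

lemma closed_walk_stage_Suc:
  assumes ws: "set ws \<subseteq> initial H s \<times> initial L s" and walk: "walk (stage (Suc s)) ws x x"
  shows "walk (stage s) ws x x"
proof -
  have fin: "finite (stage s)" using stage_finite_partial_bij by blast
  have H_letters: "fst ` set ws \<subseteq> initial H s" and L_letters: "snd ` set ws \<subseteq> initial L s"
    using ws by auto
  consider "stage (Suc s) = stage s"
    | "stage (Suc s) = insert (s div 2, new_value s (stage s)) (stage s)"
    | "stage (Suc s) = insert (new_point s (stage s), s div 2) (stage s)"
    unfolding stage.simps next_stage_def by metis
  then show ?thesis
  proof cases
    case 1 then show ?thesis using walk by (simp only:)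
  next
    case 2
    then have "walk (insert (s div 2, new_value s (stage s)) (stage s)) ws x x"
      using walk by (simp only:)
    then show ?thesis by (rule closed_walk_insert_new_value[OF new_value[OF fin] H_letters])
  next
    case 3
    then have "walk (insert (new_point s (stage s), s div 2) (stage s)) ws x x"
      using walk by (simp only:)
    then show ?thesis by (rule walk_insert_new_point[OF new_point[OF fin] L_letters])
  qed
qed

lemma closed_walk_stage_down:
  assumes ws: "set ws \<subseteq> initial H s \<times> initial L s" and "s \<le> t"
  shows "walk (stage t) ws x x \<Longrightarrow> walk (stage s) ws x x"
  using assms(2)
proof (induction t rule: dec_induct)
  case (step t)
  have "set ws \<subseteq> initial H t \<times> initial L t"
    using ws initial_mono[OF step.hyps(1)] by blast
  then show ?case using step closed_walk_stage_Suc by blast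
qed

definition limit :: "(nat \<times> nat) set" where
  "limit = (\<Union>s. stage s)"

lemma limit_partial_bij: "partial_bij limit"
proof -
  have "\<exists>s. (x, y) \<in> stage s \<and> (u, v) \<in> stage s"
    if xy: "(x, y) \<in> limit" and uv: "(u, v) \<in> limit" for x y u v
  proof -
    obtain s t where "(x, y) \<in> stage s" "(u, v) \<in> stage t" using xy uv unfolding limit_def by blast
    then show ?thesis using stage_mono[of s "max s t"] stage_mono[of t "max s t"] by auto
  qed
  then show ?thesis
    using stage_finite_partial_bij unfolding partial_bij_def by metis
qed

definition conjugator :: "nat \<Rightarrow> nat" where
  "conjugator x = (THE y. (x, y) \<in> limit)"

lemma limit_eq_graph: "limit = {(c, conjugator c) | c. True}"
proof -
  have "(x, conjugator x) \<in> limit" for x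
  proof -
    obtain y where y: "(x, y) \<in> limit" using stage_Domain[of x] unfolding limit_def by blast
    then have "conjugator x = y"
      unfolding conjugator_def using limit_partial_bij by (auto simp: partial_bij_def)
    then show ?thesis using y by simp
  qed
  then show ?thesis using limit_partial_bij by (auto simp: partial_bij_def)
qed

lemma bij_conjugator: "bij conjugator"
proof (rule bijI)
  show "inj conjugator"
    using limit_partial_bij by (auto simp: inj_def partial_bij_def limit_eq_graph)
  have "y \<in> Range limit" for y using stage_Range[of y] unfolding limit_def by blast
  then show "surj conjugator" by (auto simp: limit_eq_graph)
qed

text \<open>A walk in the limit uses only finitely many pairs, so it already exists at some stage.\<close>
lemma walk_limit_stage: "walk limit ws x y \<Longrightarrow> \<exists>s. walk (stage s) ws x y"
proof (induction limit ws x y rule: walk.induct)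
  case (2 g l ws x y)
  then obtain c e where ce: "(c, x) \<in> limit" "(l c, e) \<in> limit" "walk limit ws (g e) y"
    by auto
  then obtain s0 where s0: "walk (stage s0) ws (g e) y" using 2 by blast
  obtain s1 s2 where s12: "(c, x) \<in> stage s1" "(l c, e) \<in> stage s2"
    using ce unfolding limit_def by blast
  let ?m = "max s0 (max s1 s2)"
  have "(c, x) \<in> stage ?m" "(l c, e) \<in> stage ?m" "walk (stage ?m) ws (g e) y"
    using s12 stage_mono s0 walk_mono by (meson max.cobounded1 max.cobounded2 order_trans subsetD)+
  then show ?case by auto
qed auto

text \<open>Fixed points of a non-trivial word are starting points of closed walks in the limit; by the
  key invariant they lie in the range of one finite stage.\<close>
lemma finite_Fix_conj_word:
  assumes ne: "ws \<noteq> []" and ws: "set ws \<subseteq> (H - {id}) \<times> (L - {id})"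
  shows "finite (Fix (conj_word conjugator ws))"
proof -
  obtain j where j: "set ws \<subseteq> initial H j \<times> initial L j"
    using letters_in_initial[OF finite_set ws] .
  have "Fix (conj_word conjugator ws) = {x. walk limit ws x x}"
    unfolding Fix_def limit_eq_graph using walk_graph_iff[OF bij_conjugator] by blast
  also have "\<dots> \<subseteq> Range (stage j)"
  proof
    fix x assume "x \<in> {x. walk limit ws x x}"
    then obtain s where s: "walk (stage s) ws x x" using walk_limit_stage by blast
    have "walk (stage j) ws x x"
    proof (cases "s \<le> j")
      case True then show ?thesis using s walk_mono stage_mono by blast
    next
      case False then show ?thesis using closed_walk_stage_down[OF j _ s] by simp
    qed
    then show "x \<in> Range (stage j)" using walk_start ne by blast
  qed
  finally show ?thesis
    using stage_finite_partial_bij finite_Range finite_subset by blast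
qed

end

lemma generic_conjugator:
  assumes "countable H" "countable L"
    "\<And>h. h \<in> H \<Longrightarrow> inj h \<and> cofinitary h" "\<And>l. l \<in> L \<Longrightarrow> inj l \<and> cofinitary l"
  shows "\<exists>p. bij p \<and> (\<forall>ws. ws \<noteq> [] \<longrightarrow> set ws \<subseteq> (H - {id}) \<times> (L - {id}) \<longrightarrow>
           finite (Fix (conj_word p ws)))"
proof -
  interpret generic_conjugation H L using assms by unfold_locales
  show ?thesis using bij_conjugator finite_Fix_conj_word by blast
qed

section \<open>Amalgamating with a generic conjugate\<close>

lemma alternating_conj_word:
  assumes p: "bij p"
  shows "alternating H (conjugate p ` L) xs \<Longrightarrow> xs \<noteq> [] \<Longrightarrow> fst (hd xs) \<Longrightarrow>
    \<not> fst (last xs) \<Longrightarrow>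
    \<exists>ws. ws \<noteq> [] \<and> set ws \<subseteq> (H - {id}) \<times> (L - {id}) \<and> word_eval xs = conj_word p ws"
proof (induction xs rule: length_induct)
  case (1 xs)
  let ?A = "conjugate p ` L"
  obtain x1 ys where "xs = x1 # ys" using "1.prems"(2) by (cases xs) auto
  moreover have "ys \<noteq> []" using "1.prems"(3,4) \<open>xs = x1 # ys\<close> by auto
  ultimately obtain x2 rest where xs: "xs = x1 # x2 # rest" by (cases ys) auto
  have x1: "fst x1" "snd x1 \<in> H" "snd x1 \<noteq> id" and x2: "\<not> fst x2" "snd x2 \<in> ?A" "snd x2 \<noteq> id"
    and rest: "alternating H ?A rest" "rest \<noteq> [] \<Longrightarrow> fst (hd rest)"
    using "1.prems"(1,3) xs by (auto simp: alternating_Cons is_letter_def)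
  obtain l where l: "l \<in> L" "snd x2 = conjugate p l" using x2 by blast
  have "l \<noteq> id" using l x2(3) conjugate_id[OF p] by auto
  have eval: "word_eval xs = (snd x1 \<circ> conjugate p l) \<circ> word_eval rest"
    using xs l by (simp add: comp_assoc)
  show ?case
  proof (cases "rest = []")
    case True
    have "set [(snd x1, l)] \<subseteq> (H - {id}) \<times> (L - {id})" using x1 l \<open>l \<noteq> id\<close> by (simp add: id_def)
    moreover have "word_eval xs = conj_word p [(snd x1, l)]" using eval True by simp
    ultimately show ?thesis by blast
  next
    case False
    have "length rest < length xs" "\<not> fst (last rest)" using "1.prems"(4) xs False by auto
    then obtain ws where ws: "ws \<noteq> []" "set ws \<subseteq> (H - {id}) \<times> (L - {id})"
        "word_eval rest = conj_word p ws"
      using "1.IH" rest False by blast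
    have "set (ws @ [(snd x1, l)]) \<subseteq> (H - {id}) \<times> (L - {id})"
      using ws(2) x1 l \<open>l \<noteq> id\<close> by (auto simp: id_def)
    moreover have "word_eval xs = conj_word p (ws @ [(snd x1, l)])"
      using eval ws(3) conj_word_snoc by simp
    ultimately show ?thesis by blast
  qed
qed

lemma amalgam_with_generic_conjugate:
  assumes H: "cofinitary_group H" "countable H" and L: "cofinitary_group L" "countable L"
  obtains p where "bij p" "cofinitary_group (amalgam H (conjugate p ` L))"
proof -
  have perm: "perm_group H" "perm_group L" and cof: "\<forall>h\<in>H. cofinitary h" "\<forall>l\<in>L. cofinitary l"
    using H(1) L(1) by (simp_all add: cofinitary_group_iff)
  obtain p where p: "bij p" and words: "\<And>ws. ws \<noteq> [] \<Longrightarrow> set ws \<subseteq> (H - {id}) \<times> (L - {id}) \<Longrightarrow>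
      finite (Fix (conj_word p ws))"
    using generic_conjugator[OF H(2) L(2)] perm cof by (meson bij_is_inj perm_groupD(1))
  let ?A = "conjugate p ` L"
  interpret amalgam_criterion H ?A
  proof
    show "perm_group H" "perm_group ?A" using perm perm_group_conjugate[OF p] by auto
    show "\<And>h. h \<in> H \<Longrightarrow> cofinitary h" "\<And>a. a \<in> ?A \<Longrightarrow> cofinitary a"
      using cof cofinitary_conjugate[OF p] by auto
    show "finite (Fix (word_eval xs))"
      if "alternating H ?A xs" "xs \<noteq> []" "fst (hd xs)" "\<not> fst (last xs)" for xs
      using alternating_conj_word[OF p that] words by auto
  qed
  have "cofinitary_group (amalgam H ?A)"
    using perm_group_amalgam[OF perm_H perm_A] amalgam_cofinitary by (simp add: cofinitary_group_iff)
  then show ?thesis using p that by blast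
qed

section \<open>The regular representation of a countable group\<close>

text \<open>A group \<open>K\<close> acts freely on \<open>carrier K \<times> \<nat>\<close> by left multiplication in the first
  coordinate; transported to \<open>\<nat>\<close> along a bijection \<open>code\<close>, this embeds \<open>K\<close> into Sym(N) with
  fixed-point free non-identity elements.\<close>
locale free_action = group K for K :: "nat monoid" (structure) +
  fixes code :: "nat \<times> nat \<Rightarrow> nat"
  assumes code: "bij_betw code (carrier K \<times> UNIV) UNIV"
begin

definition decode :: "nat \<Rightarrow> nat \<times> nat" where
  "decode = inv_into (carrier K \<times> UNIV) code"

lemma decode_in: "fst (decode x) \<in> carrier K"
  unfolding decode_def using bij_betw_apply[OF bij_betw_inv_into[OF code]] by (simp add: mem_Times_iff)

lemma code_decode: "code (decode x) = x"
  unfolding decode_def using bij_betw_inv_into_right[OF code] by simp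

lemma decode_code: "c \<in> carrier K \<Longrightarrow> decode (code (c, n)) = (c, n)"
  unfolding decode_def using bij_betw_inv_into_left[OF code] by simp

definition act :: "nat \<Rightarrow> nat \<Rightarrow> nat" where
  "act k x = code (k \<otimes> fst (decode x), snd (decode x))"

lemma act_mult: "k1 \<in> carrier K \<Longrightarrow> k2 \<in> carrier K \<Longrightarrow> act (k1 \<otimes> k2) = act k1 \<circ> act k2"
  by (rule ext) (simp add: act_def decode_code decode_in m_assoc)

lemma act_one: "act \<one> = id"
  by (rule ext) (simp add: act_def decode_in code_decode)

lemma act_bij: assumes "k \<in> carrier K" shows "bij (act k)"
proof (rule o_bij)
  show "act (inv k) \<circ> act k = id" using act_mult[of "inv k" k] act_one assms by simp
  show "act k \<circ> act (inv k) = id" using act_mult[of k "inv k"] act_one assms by simp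
qed

lemma act_hom: "act \<in> hom K SymN"
  by (rule homI) (simp_all add: carrier_SymN act_bij act_mult mult_SymN)

lemma act_inj: "inj_on act (carrier K)"
proof
  fix k1 k2 assume k: "k1 \<in> carrier K" "k2 \<in> carrier K" "act k1 = act k2"
  have "act k (code (\<one>, 0)) = code (k, 0)" if "k \<in> carrier K" for k
    using that by (simp add: act_def decode_code)
  then have "code (k1, 0) = code (k2, 0)" using k by metis
  then show "k1 = k2" using code k unfolding bij_betw_def inj_on_def by blast
qed

lemma act_Fix: "k \<in> carrier K \<Longrightarrow> k \<noteq> \<one> \<Longrightarrow> Fix (act k) = {}"
proof (rule ccontr)
  assume k: "k \<in> carrier K" "k \<noteq> \<one>" and "Fix (act k) \<noteq> {}"
  then obtain x where x: "act k x = x" by (auto simp: Fix_def)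
  have c: "fst (decode x) \<in> carrier K" by (rule decode_in)
  have "code (k \<otimes> fst (decode x), snd (decode x)) = code (fst (decode x), snd (decode x))"
    using x code_decode[of x] by (simp add: act_def)
  then have "k \<otimes> fst (decode x) = fst (decode x)"
    using code k c unfolding bij_betw_def inj_on_def by (meson SigmaI UNIV_I m_closed prod.inject)
  then show False using k c r_cancel_one by blast
qed

lemma cofinitary_group_act: "cofinitary_group (act ` carrier K)"
proof -
  interpret group_hom K SymN act
    by (simp add: group_hom_def group_hom_axioms_def group_BijGroup act_hom is_group)
  have "subgroup (act ` carrier K) SymN" by (rule img_is_subgroup)
  moreover have "cofinitary (act k)" if "k \<in> carrier K" for k
    using that act_Fix act_one by (cases "k = \<one>") (auto simp: cofinitary_iff)
  ultimately show ?thesis by (auto simp: cofinitary_group_def)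
qed

end

text \<open>For \<open>K\<close> with carrier a non-empty set of naturals, \<open>carrier K \<times> \<nat>\<close> is countably infinite.\<close>
lemma free_action_exists:
  assumes "group (K :: nat monoid)" shows "\<exists>code. free_action K code"
proof -
  have "\<one>\<^bsub>K\<^esub> \<in> carrier K" by (simp add: assms group.is_monoid monoid.one_closed)
  then have "infinite (carrier K \<times> (UNIV :: nat set))"
    using finite_cartesian_productD2 by auto
  moreover have "countable (carrier K \<times> (UNIV :: nat set))" by auto
  ultimately obtain code where "bij_betw code (carrier K \<times> (UNIV :: nat set)) (UNIV :: nat set)"
    using countableE_infinite by blast
  then show ?thesis using assms by (auto simp: free_action_def free_action_axioms_def)
qed

section \<open>The extension step\<close>

definition embeds :: "nat monoid \<Rightarrow> (nat \<Rightarrow> nat) set \<Rightarrow> bool" where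
  "embeds K G \<longleftrightarrow> (\<exists>h. h \<in> hom K SymN \<and> inj_on h (carrier K) \<and> h ` carrier K \<subseteq> G)"

lemma embeds_mono: "embeds K G \<Longrightarrow> G \<subseteq> G' \<Longrightarrow> embeds K G'"
  unfolding embeds_def by blast

lemma countable_extension:
  assumes G: "cofinitary_group G" "countable G" and K: "group (K :: nat monoid)"
  shows "\<exists>G'. cofinitary_group G' \<and> countable G' \<and> G \<subseteq> G' \<and> embeds K G'"
proof -
  obtain code where "free_action K code" using free_action_exists[OF K] by blast
  then interpret free_action K code .
  have "countable (act ` carrier K)" by simp
  then obtain p where p: "bij p" and cof: "cofinitary_group (amalgam G (conjugate p ` act ` carrier K))"
    by (rule amalgam_with_generic_conjugate[OF G cofinitary_group_act])
  define G' where "G' = amalgam G (conjugate p ` act ` carrier K)"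
  define h where "h k = conjugate p (act k)" for k
  have hom: "h \<in> hom K SymN"
  proof (rule homI)
    show "h k \<in> carrier SymN" if "k \<in> carrier K" for k
      using that by (simp add: h_def carrier_SymN bij_conjugate p act_bij)
    show "h (x \<otimes>\<^bsub>K\<^esub> y) = h x \<otimes>\<^bsub>SymN\<^esub> h y" if "x \<in> carrier K" "y \<in> carrier K" for x y
      using that by (simp add: h_def act_mult conjugate_comp p mult_SymN bij_conjugate act_bij)
  qed
  have inj: "inj_on h (carrier K)"
  proof (rule inj_onI)
    fix x y assume "x \<in> carrier K" "y \<in> carrier K" "h x = h y"
    then show "x = y" using conjugate_inj[OF p] act_inj unfolding h_def inj_on_def by blast
  qed
  have image: "h ` carrier K \<subseteq> G'"
  proof
    fix f assume "f \<in> h ` carrier K"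
    then have "f \<in> conjugate p ` act ` carrier K" by (auto simp: h_def)
    then show "f \<in> G'" unfolding G'_def by (intro amalgam_contains[of False]) simp_all
  qed
  have "G \<subseteq> G'" unfolding G'_def by (intro subsetI amalgam_contains[of True]) simp_all
  moreover have "countable G'" unfolding G'_def using G(2) by (intro countable_amalgam) auto
  moreover have "embeds K G'" unfolding embeds_def using hom inj image by blast
  moreover have "cofinitary_group G'" unfolding G'_def by (rule cof)
  ultimately show ?thesis by blast
qed

section \<open>A well-order with countable initial segments from CH\<close>

text \<open>A strict well-order of a type in which every element has only countably many predecessors,
  i.e. a well-order of type at most \<open>\<omega>\<^sub>1\<close>.\<close>
definition countable_segments_order :: "'a rel \<Rightarrow> bool" where
  "countable_segments_order R \<longleftrightarrow> wf R \<and> (\<forall>u v. u \<noteq> v \<longrightarrow> (u, v) \<in> R \<or> (v, u) \<in> R)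
     \<and> (\<forall>v. countable {u. (u, v) \<in> R})"

lemma countable_segments_order_inv_image:
  assumes R: "wf R" and f: "inj f"
    and total: "\<And>u v. u \<noteq> v \<Longrightarrow> (f u, f v) \<in> R \<or> (f v, f u) \<in> R"
    and segments: "\<And>v. countable {y. (y, f v) \<in> R}"
  shows "countable_segments_order (inv_image R f)"
  unfolding countable_segments_order_def
proof (intro conjI allI impI)
  show "wf (inv_image R f)" using R by simp
  show "(u, v) \<in> inv_image R f \<or> (v, u) \<in> inv_image R f" if "u \<noteq> v" for u v
    using total[OF that] by simp
  fix v
  have "f ` {u. (u, v) \<in> inv_image R f} \<subseteq> {y. (y, f v) \<in> R}" by auto
  then have "countable (f ` {u. (u, v) \<in> inv_image R f})" using segments countable_subset by blast
  then show "countable {u. (u, v) \<in> inv_image R f}"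
    using f countable_image_inj_on by (metis inj_on_subset subset_UNIV)
qed

text \<open>Under CH the reals carry such an order: in a well-order of the reals, the predecessors of
  the least element with uncountably many predecessors form a set of size continuum, each of
  whose elements has countably many predecessors.\<close>
lemma CH_countable_segments_order:
  assumes ch: CH
  shows "\<exists>T :: real rel. countable_segments_order T"
proof -
  obtain W :: "real rel" where W: "well_order_on UNIV W" using well_order_on by blast
  define S where "S = W - Id"
  have wf: "wf S" using W by (simp add: well_order_on_def S_def)
  have total: "\<And>u v. u \<noteq> v \<Longrightarrow> (u, v) \<in> S \<or> (v, u) \<in> S"
    using W by (auto simp: S_def well_order_on_def linear_order_on_def total_on_def)
  show ?thesis
  proof (cases "\<forall>x. countable {y. (y, x) \<in> S}")
    case True
    then show ?thesis using wf total by (auto simp: countable_segments_order_def)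
  next
    case False
    then have "{x. uncountable {y. (y, x) \<in> S}} \<noteq> {}" by blast
    then obtain x0 where x0: "uncountable {y. (y, x0) \<in> S}"
      and least: "\<And>y. (y, x0) \<in> S \<Longrightarrow> countable {z. (z, y) \<in> S}"
      by (rule wfE_min'[OF wf]) blast
    define A0 where "A0 = {y. (y, x0) \<in> S}"
    have "countable A0 \<or> A0 \<approx> (UNIV :: real set)" using ch unfolding CH_def by blast
    then have "A0 \<approx> (UNIV :: real set)" using x0 by (simp add: A0_def)
    then obtain f where "bij_betw f A0 (UNIV :: real set)" unfolding eqpoll_def by blast
    then obtain g where g: "bij_betw g (UNIV :: real set) A0" using bij_betw_inv by blast
    have "countable_segments_order (inv_image S g)"
    proof (rule countable_segments_order_inv_image[OF wf])
      show "inj g" using g by (simp add: bij_betw_def)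
      show "(g u, g v) \<in> S \<or> (g v, g u) \<in> S" if "u \<noteq> v" for u v
      proof -
        have "g u \<noteq> g v" using g that by (metis bij_betw_imp_inj_on inj_on_def UNIV_I)
        then show ?thesis by (rule total)
      qed
      show "countable {y. (y, g v) \<in> S}" for v
      proof -
        have "g v \<in> A0" using g by (simp add: bij_betw_apply)
        then show ?thesis using least by (simp add: A0_def)
      qed
    qed
    then show ?thesis by blast
  qed
qed

text \<open>Monoids with carrier and operation on the naturals are coded injectively by sets of naturals,
  hence injectively by reals.\<close>
definition monoid_code :: "nat monoid \<Rightarrow> nat set" where
  "monoid_code K = {to_nat (0::nat, n, 0::nat) | n. n \<in> carrier K}
     \<union> {to_nat (1::nat, prod_encode (a, b), mult K a b) | a b. True}
     \<union> {to_nat (2::nat, one K, 0::nat)}"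

lemma inj_monoid_code: "inj monoid_code"
proof
  fix K1 K2 :: "nat monoid" assume eq: "monoid_code K1 = monoid_code K2"
  have carrier: "to_nat (0::nat, n, 0::nat) \<in> monoid_code K \<longleftrightarrow> n \<in> carrier K" for n K
    by (auto simp: monoid_code_def)
  have mult: "to_nat (1::nat, prod_encode (a, b), c) \<in> monoid_code K \<longleftrightarrow> c = mult K a b" for a b c K
    by (auto simp: monoid_code_def prod_encode_eq)
  have one: "to_nat (2::nat, c, 0::nat) \<in> monoid_code K \<longleftrightarrow> c = one K" for c K
    by (auto simp: monoid_code_def)
  have "carrier K1 = carrier K2" using eq carrier by blast
  moreover have "mult K1 = mult K2" using eq mult by (intro ext) metis
  moreover have "one K1 = one K2" using eq one by metis
  ultimately show "K1 = K2" by (intro monoid.equality) auto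
qed

lemma CH_countable_segments_order_monoid:
  assumes CH shows "\<exists>R :: nat monoid rel. countable_segments_order R"
proof -
  obtain T :: "real rel" where T: "countable_segments_order T"
    using CH_countable_segments_order[OF assms] by blast
  obtain f :: "nat set \<Rightarrow> real" where "bij f"
    using nat_sets_eqpoll_reals unfolding eqpoll_def by blast
  then have inj: "inj (f \<circ> monoid_code)" using inj_monoid_code by (simp add: bij_is_inj inj_compose)
  have "countable_segments_order (inv_image T (f \<circ> monoid_code))"
  proof (rule countable_segments_order_inv_image[OF _ inj])
    show "wf T" using T by (simp add: countable_segments_order_def)
    show "((f \<circ> monoid_code) u, (f \<circ> monoid_code) v) \<in> T \<or> ((f \<circ> monoid_code) v, (f \<circ> monoid_code) u) \<in> T"
      if "u \<noteq> v" for u v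
      using T inj that unfolding countable_segments_order_def inj_def by metis
    show "countable {y. (y, (f \<circ> monoid_code) v) \<in> T}" for v
      using T by (simp add: countable_segments_order_def)
  qed
  then show ?thesis by blast
qed

section \<open>The transfinite construction and the main theorem\<close>

definition extends_by :: "(nat \<Rightarrow> nat) set \<Rightarrow> nat monoid \<Rightarrow> (nat \<Rightarrow> nat) set \<Rightarrow> bool" where
  "extends_by U K G \<longleftrightarrow> cofinitary_group G \<and> countable G \<and> U \<subseteq> G \<and> (group K \<longrightarrow> embeds K G)"

lemma extends_by_exists:
  assumes "cofinitary_group U" "countable U" shows "\<exists>G. extends_by U K G"
proof (cases "group K")
  case True then show ?thesis
    using countable_extension[OF assms] by (auto simp: extends_by_def)
next
  case False then show ?thesis
    using assms by (auto simp: extends_by_def)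
qed

text \<open>Recursion along an order with countable segments: the group attached to \<open>K\<close> extends the
  union of the groups attached to its (countably many) predecessors.\<close>
locale countable_segments =
  fixes R :: "nat monoid rel"
  assumes order: "countable_segments_order R"
begin

lemma wf_R: "wf R" and total_R: "u \<noteq> v \<Longrightarrow> (u, v) \<in> R \<or> (v, u) \<in> R"
  and segment_R: "countable {u. (u, v) \<in> R}"
  using order by (auto simp: countable_segments_order_def)

text \<open>\<open>below F K\<close> is the union of the groups \<open>F K\<close> attached to the predecessors of \<open>K\<close>
  (together with the identity, so that it is a group also when \<open>K\<close> is minimal).\<close>
definition below :: "(nat monoid \<Rightarrow> (nat \<Rightarrow> nat) set) \<Rightarrow> nat monoid \<Rightarrow> (nat \<Rightarrow> nat) set" where
  "below F K = insert id (\<Union>{F K' | K'. (K', K) \<in> R})"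

definition tower :: "nat monoid \<Rightarrow> (nat \<Rightarrow> nat) set" where
  "tower = wfrec R (\<lambda>F K. SOME G. extends_by (below F K) K G)"

lemma tower_eq: "tower K = (SOME G. extends_by (below tower K) K G)"
proof -
  have "tower K = (SOME G. extends_by (below (cut tower R K) K) K G)"
    unfolding tower_def by (rule wfrec[OF wf_R])
  moreover have "below (cut tower R K) K = below tower K"
    unfolding below_def by (auto simp: cut_apply)
  ultimately show ?thesis by simp
qed

text \<open>One step of the induction: if all predecessors are correctly built, the union below \<open>K\<close>
  is a countable cofinitary group (a chain, by totality), so \<open>tower K\<close> extends it.\<close>
lemma tower_step:
  assumes IH: "\<And>K'. (K', K) \<in> R \<Longrightarrow> extends_by (below tower K') K' (tower K')"
  shows "extends_by (below tower K) K (tower K)"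
proof -
  let ?C = "{tower K' | K'. (K', K) \<in> R}"
  have mono: "tower K1 \<subseteq> tower K2" if "(K1, K2) \<in> R" "(K2, K) \<in> R" for K1 K2
    using IH[OF that(2)] that(1) by (auto simp: extends_by_def below_def)
  have chain: "X \<subseteq> Y \<or> Y \<subseteq> X" if "X \<in> ?C" "Y \<in> ?C" for X Y
  proof -
    obtain K1 K2 where K: "X = tower K1" "Y = tower K2" "(K1, K) \<in> R" "(K2, K) \<in> R"
      using \<open>X \<in> ?C\<close> \<open>Y \<in> ?C\<close> by blast
    then show ?thesis using mono total_R[of K1 K2] by (cases "K1 = K2") auto
  qed
  have "cofinitary_group (below tower K)"
    unfolding below_def using IH chain
    by (intro cofinitary_group_insert_id_Union) (auto simp: extends_by_def)
  moreover have "countable (below tower K)"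
  proof -
    have "countable (\<Union>K'\<in>{K'. (K', K) \<in> R}. tower K')"
    proof (rule countable_UN[OF segment_R])
      fix K' assume "K' \<in> {K'. (K', K) \<in> R}"
      then show "countable (tower K')" using IH by (simp add: extends_by_def)
    qed
    moreover have "\<Union>?C = (\<Union>K'\<in>{K'. (K', K) \<in> R}. tower K')" by blast
    ultimately show ?thesis unfolding below_def by simp
  qed
  ultimately have "\<exists>G. extends_by (below tower K) K G" by (rule extends_by_exists)
  then show ?thesis unfolding tower_eq[of K] by (rule someI_ex)
qed

lemma tower_extends: "extends_by (below tower K) K (tower K)"
  by (induction K rule: wf_induct_rule[OF wf_R]) (rule tower_step)

lemma tower_mono: "(K1, K2) \<in> R \<Longrightarrow> tower K1 \<subseteq> tower K2"
  using tower_extends[of K2] unfolding extends_by_def below_def by blast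

lemma tower_chain: "tower K1 \<subseteq> tower K2 \<or> tower K2 \<subseteq> tower K1"
proof (cases "K1 = K2")
  case False then show ?thesis using total_R[OF False] tower_mono by blast
qed simp

lemma cofinitary_group_Union_tower: "cofinitary_group (\<Union>(range tower))"
proof (rule cofinitary_group_Union_chain)
  show "cofinitary_group X" if "X \<in> range tower" for X
    using that tower_extends by (auto simp: extends_by_def)
  show "X \<subseteq> Y \<or> Y \<subseteq> X" if "X \<in> range tower" "Y \<in> range tower" for X Y
    using that tower_chain by blast
qed simp

lemma embeds_Union_tower: "group K \<Longrightarrow> embeds K (\<Union>(range tower))"
  using tower_extends[of K] unfolding extends_by_def embeds_def by blast

end

theorem mainTheorem12:
  assumes "CH"
  shows "\<exists>G. maximal_cofinitary_group G \<and>
           (\<forall>K :: nat monoid. group K \<longrightarrow>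
              (\<exists>h. h \<in> hom K SymN \<and> inj_on h (carrier K) \<and> h ` carrier K \<subseteq> G))"
proof -
  obtain R :: "nat monoid rel" where "countable_segments_order R"
    using CH_countable_segments_order_monoid[OF assms] by blast
  then interpret countable_segments R by unfold_locales
  obtain M where M: "maximal_cofinitary_group M" and sub: "\<Union>(range tower) \<subseteq> M"
    using maximal_cofinitary_extension[OF cofinitary_group_Union_tower] by blast
  have "\<forall>K :: nat monoid. group K \<longrightarrow>
      (\<exists>h. h \<in> hom K SymN \<and> inj_on h (carrier K) \<and> h ` carrier K \<subseteq> M)"
    using embeds_Union_tower embeds_mono[OF _ sub] unfolding embeds_def by blast
  then show ?thesis using M by blast
qed

end
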